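(* For each $n$, let $G=(V,E)$ be the complete graph on $V=\{1,\ldots,n\}$ and let $b(\mathbf x)=\sum_{ij\in E}a_{ij}x_ix_j$, where the coefficients $a_{ij}$ are chosen independently and uniformly at random from $\{1,-1\}$. For $\mathbf x=(1/2,1/2,\ldots,1/2)$ we have \[\lim_{n\to\infty}\Pr\left[\operatorname{mcgap}[b](\mathbf x)\geqslant\frac{\sqrt n}{4}\operatorname{chgap}[b](\mathbf x)\right]=1.\]
   Context: Let $G=(V,E)$ be an undirected graph with $V=\{1,\ldots,n\}$; write $ij$ for the edge $\{i,j\}$. A bilinear function is $b:[0,1]^n\to\mathbb R$, $b(\mathbf x)=\sum_{ij\in E}a_{ij}x_ix_j$ with real coefficients $a_{ij}$. Its graph is $B=\{(\mathbf x,z)\in[0,1]^n\times\mathbb R: z=b(\mathbf x)\}$, and $\operatorname{conv}(B)$ is its convex hull. The McCormick polytopes are $P=\{(\mathbf x,\mathbf y)\in[0,1]^n\times[0,1]^{|E|}: y_{ij}\le x_i,\ y_{ij}\le x_j,\ y_{ij}\ge x_i+x_j-1\ \forall ij\in E\}$ and $Q=\{(\mathbf x,z)\in[0,1]^n\times\mathbb R:\exists\mathbf y\in[0,1]^{|E|}\text{ with }(\mathbf x,\mathbf y)\in P,\ z=\sum_{ij\in E}a_{ij}y_{ij}\}$. Define for $\mathbf x\in[0,1]^n$: $\operatorname{cav}[b](\mathbf x)=\max\{z:(\mathbf x,z)\in\operatorname{conv}(B)\}$, $\operatorname{vex}[b](\mathbf x)=\min\{z:(\mathbf x,z)\in\operatorname{conv}(B)\}$,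 $\operatorname{mcu}[b](\mathbf x)=\max\{z:(\mathbf x,z)\in Q\}$, $\operatorname{mcl}[b](\mathbf x)=\min\{z:(\mathbf x,z)\in Q\}$, the convex hull gap $\operatorname{chgap}[b]=\operatorname{cav}[b]-\operatorname{vex}[b]$ and the McCormick gap $\operatorname{mcgap}[b]=\operatorname{mcu}[b]-\operatorname{mcl}[b]$. *)

theory Defs
  imports "HOL-Analysis.Analysis"
begin

text \<open>Points of [0,1]^n are represented as functions nat => real, supported on {1..n}.
  Edges ij are represented as pairs (i,j) with i < j.\<close>

definition cube :: "nat \<Rightarrow> (nat \<Rightarrow> real) set" where
  "cube n = {x. (\<forall>i\<in>{1..n}. 0 \<le> x i \<and> x i \<le> 1) \<and> (\<forall>i. i \<notin> {1..n} \<longrightarrow> x i = 0)}"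

definition complete_edges :: "nat \<Rightarrow> (nat \<times> nat) set" where
  "complete_edges n = {(i,j). 1 \<le> i \<and> i < j \<and> j \<le> n}"

definition bil :: "(nat \<times> nat) set \<Rightarrow> (nat \<times> nat \<Rightarrow> real) \<Rightarrow> (nat \<Rightarrow> real) \<Rightarrow> real" where
  "bil E a x = (\<Sum>(i,j)\<in>E. a (i,j) * x i * x j)"

definition graphB :: "nat \<Rightarrow> (nat \<times> nat) set \<Rightarrow> (nat \<times> nat \<Rightarrow> real) \<Rightarrow> ((nat \<Rightarrow> real) \<times> real) set" where
  "graphB n E a = {(x, bil E a x) | x. x \<in> cube n}"

definition convhull :: "((nat \<Rightarrow> real) \<times> real) set \<Rightarrow> ((nat \<Rightarrow> real) \<times> real) set" where
  "convhull S = {(x, z). \<exists>(k::nat) (c::nat \<Rightarrow> real) (p::nat \<Rightarrow> (nat \<Rightarrow> real) \<times> real).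
      (\<forall>l<k. 0 \<le> c l \<and> p l \<in> S) \<and> (\<Sum>l<k. c l) = 1 \<and>
      x = (\<lambda>t. \<Sum>l<k. c l * fst (p l) t) \<and> z = (\<Sum>l<k. c l * snd (p l))}"

definition cav :: "nat \<Rightarrow> (nat \<times> nat) set \<Rightarrow> (nat \<times> nat \<Rightarrow> real) \<Rightarrow> (nat \<Rightarrow> real) \<Rightarrow> real" where
  "cav n E a x = Sup {z. (x, z) \<in> convhull (graphB n E a)}"

definition vex :: "nat \<Rightarrow> (nat \<times> nat) set \<Rightarrow> (nat \<times> nat \<Rightarrow> real) \<Rightarrow> (nat \<Rightarrow> real) \<Rightarrow> real" where
  "vex n E a x = Inf {z. (x, z) \<in> convhull (graphB n E a)}"

definition mcP :: "nat \<Rightarrow> (nat \<times> nat) set \<Rightarrow> ((nat \<Rightarrow> real) \<times> (nat \<times> nat \<Rightarrow> real)) set" where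
  "mcP n E = {(x, y). x \<in> cube n \<and> (\<forall>e. e \<notin> E \<longrightarrow> y e = 0) \<and>
      (\<forall>(i,j)\<in>E. 0 \<le> y (i,j) \<and> y (i,j) \<le> 1 \<and> y (i,j) \<le> x i \<and> y (i,j) \<le> x j \<and> y (i,j) \<ge> x i + x j - 1)}"

definition mcQ :: "nat \<Rightarrow> (nat \<times> nat) set \<Rightarrow> (nat \<times> nat \<Rightarrow> real) \<Rightarrow> ((nat \<Rightarrow> real) \<times> real) set" where
  "mcQ n E a = {(x, z). x \<in> cube n \<and> (\<exists>y. (x, y) \<in> mcP n E \<and> z = (\<Sum>e\<in>E. a e * y e))}"

definition mcu :: "nat \<Rightarrow> (nat \<times> nat) set \<Rightarrow> (nat \<times> nat \<Rightarrow> real) \<Rightarrow> (nat \<Rightarrow> real) \<Rightarrow> real" where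
  "mcu n E a x = Sup {z. (x, z) \<in> mcQ n E a}"

definition mcl :: "nat \<Rightarrow> (nat \<times> nat) set \<Rightarrow> (nat \<times> nat \<Rightarrow> real) \<Rightarrow> (nat \<Rightarrow> real) \<Rightarrow> real" where
  "mcl n E a x = Inf {z. (x, z) \<in> mcQ n E a}"

definition chgap :: "nat \<Rightarrow> (nat \<times> nat) set \<Rightarrow> (nat \<times> nat \<Rightarrow> real) \<Rightarrow> (nat \<Rightarrow> real) \<Rightarrow> real" where
  "chgap n E a x = cav n E a x - vex n E a x"

definition mcgap :: "nat \<Rightarrow> (nat \<times> nat) set \<Rightarrow> (nat \<times> nat \<Rightarrow> real) \<Rightarrow> (nat \<Rightarrow> real) \<Rightarrow> real" where
  "mcgap n E a x = mcu n E a x - mcl n E a x"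

definition halfpt :: "nat \<Rightarrow> nat \<Rightarrow> real" where
  "halfpt n = (\<lambda>i. if i \<in> {1..n} then 1/2 else 0)"

text \<open>Uniformly random sign coefficients: the probability of an event is the
  fraction of sign assignments E -> {1,-1} satisfying it.\<close>
definition sign_prob :: "(nat \<times> nat) set \<Rightarrow> ((nat \<times> nat \<Rightarrow> real) \<Rightarrow> bool) \<Rightarrow> real" where
  "sign_prob E P = real (card {a \<in> E \<rightarrow>\<^sub>E {1, -1}. P a}) / real (card (E \<rightarrow>\<^sub>E ({1, -1} :: real set)))"

end

theory Submission
  imports Defs "HOL-Probability.Hoeffding"
begin

text \<open>At the centre \<open>h = (1/2,\<dots>,1/2)\<close> every McCormick variable \<open>y\<^sub>i\<^sub>j\<close> ranges freely over
  \<open>[0, 1/2]\<close>, so \<open>mcgap[b](h) = \<Sum>|a\<^sub>i\<^sub>j| / 2 = |E| / 2\<close>.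
  On the other hand \<open>b(x) = b(2x - 1)/4 + \<ell>(x)\<close> with \<open>\<ell>\<close> affine, and by multilinearity
  \<open>|b(2x - 1)| \<le> T\<close> on the whole cube, where \<open>T\<close> is the largest value of \<open>|b(s)|\<close> over sign
  vectors \<open>s \<in> {1,-1}\<^sup>n\<close>. Hence the graph of \<open>b\<close>, and with it its convex hull, lies within
  \<open>T/4\<close> of the hyperplane \<open>z = \<ell>(x)\<close>, and \<open>chgap[b] \<le> T/2\<close> everywhere.
  For fixed \<open>s\<close>, \<open>b(s)\<close> is a Rademacher sum of \<open>|E| = n(n-1)/2\<close> terms, so a Chernoff bound
  with parameter \<open>1/\<surd>n\<close> and a union bound over the \<open>2\<^sup>n\<close> sign vectors show
  \<open>T \<le> 4|E|/\<surd>n\<close> except with probability at most \<open>2^(n+1) exp(-7(n-1)/4)\<close>; then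
  \<open>\<surd>n/4 \<cdot> chgap \<le> \<surd>n/4 \<cdot> 2|E|/\<surd>n = mcgap\<close>.\<close>

lemma bil_eq_sum: "bil E a x = (\<Sum>e\<in>E. a e * x (fst e) * x (snd e))"
  unfolding bil_def by (simp add: case_prod_beta')

lemma finite_complete_edges: "finite (complete_edges n)"
  by (rule finite_subset[of _ "{1..n} \<times> {1..n}"]) (auto simp: complete_edges_def)

lemma card_complete_edges: "real (card (complete_edges n)) = real n * (real n - 1) / 2"
proof (induction n)
  case 0
  have "complete_edges 0 = {}" by (auto simp: complete_edges_def)
  then show ?case by simp
next
  case (Suc n)
  have "complete_edges (Suc n) = complete_edges n \<union> (\<lambda>i. (i, Suc n)) ` {1..n}"
    by (auto simp: complete_edges_def)
  moreover have "complete_edges n \<inter> (\<lambda>i. (i, Suc n)) ` {1..n} = {}"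
    by (auto simp: complete_edges_def)
  moreover have "card ((\<lambda>i. (i, Suc n)) ` {1..n}) = n"
    by (subst card_image) (auto simp: inj_on_def)
  ultimately have "card (complete_edges (Suc n)) = card (complete_edges n) + n"
    using finite_complete_edges by (simp add: card_Un_disjoint)
  then show ?case using Suc by (simp add: algebra_simps)
qed

lemma halfpt_in_cube: "halfpt n \<in> cube n"
  by (auto simp: halfpt_def cube_def)

lemma mcQ_halfpt_iff:
  assumes "E \<subseteq> {1..n} \<times> {1..n}"
  shows "(halfpt n, z) \<in> mcQ n E a \<longleftrightarrow>
    (\<exists>y. (\<forall>e. e \<notin> E \<longrightarrow> y e = 0) \<and> (\<forall>e\<in>E. 0 \<le> y e \<and> y e \<le> 1/2) \<and> z = (\<Sum>e\<in>E. a e * y e))"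
proof -
  have "halfpt n i = 1/2 \<and> halfpt n j = 1/2" if "(i, j) \<in> E" for i j
    using assms that by (auto simp: halfpt_def)
  then have "(\<forall>(i, j)\<in>E. 0 \<le> y (i, j) \<and> y (i, j) \<le> 1 \<and> y (i, j) \<le> halfpt n i \<and>
        y (i, j) \<le> halfpt n j \<and> halfpt n i + halfpt n j - 1 \<le> y (i, j))
      \<longleftrightarrow> (\<forall>e\<in>E. 0 \<le> y e \<and> y e \<le> 1/2)" for y
    by fastforce
  then show ?thesis
    unfolding mcQ_def mcP_def using halfpt_in_cube by auto
qed

lemma mcgap_halfpt:
  assumes E: "E \<subseteq> {1..n} \<times> {1..n}"
  shows "mcgap n E a (halfpt n) = (\<Sum>e\<in>E. \<bar>a e\<bar>) / 2"
proof -
  define Z where "Z = {z. (halfpt n, z) \<in> mcQ n E a}"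
  define U where "U = (\<Sum>e\<in>E. max (a e) 0 / 2)"
  define L where "L = (\<Sum>e\<in>E. min (a e) 0 / 2)"
  have bounds: "L \<le> z \<and> z \<le> U" if "z \<in> Z" for z
  proof -
    obtain y where y: "\<forall>e\<in>E. 0 \<le> y e \<and> y e \<le> 1/2" and z: "z = (\<Sum>e\<in>E. a e * y e)"
      using \<open>z \<in> Z\<close> mcQ_halfpt_iff[OF E] unfolding Z_def by auto
    have "min (a e) 0 / 2 \<le> a e * y e \<and> a e * y e \<le> max (a e) 0 / 2" if "e \<in> E" for e
    proof (cases "a e \<ge> 0")
      case True
      then show ?thesis using y that mult_left_mono[of "y e" "1/2" "a e"] by auto
    next
      case False
      then show ?thesis using y that mult_left_mono_neg[of "y e" "1/2" "a e"] by (auto simp: mult_nonpos_nonneg)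
    qed
    then show ?thesis
      unfolding z L_def U_def by (auto intro: sum_mono)
  qed
  have "U \<in> Z"
    unfolding Z_def mcQ_halfpt_iff[OF E] U_def
    by (auto intro!: exI[of _ "\<lambda>e. if e \<in> E \<and> a e > 0 then 1/2 else 0"] sum.cong)
  moreover have "L \<in> Z"
    unfolding Z_def mcQ_halfpt_iff[OF E] L_def
    by (auto intro!: exI[of _ "\<lambda>e. if e \<in> E \<and> a e < 0 then 1/2 else 0"] sum.cong)
  ultimately have "mcu n E a (halfpt n) = U" "mcl n E a (halfpt n) = L"
    unfolding mcu_def mcl_def Z_def[symmetric]
    by (auto intro!: cSup_eq_maximum cInf_eq_minimum dest: bounds)
  moreover have "U - L = (\<Sum>e\<in>E. \<bar>a e\<bar> / 2)"
    unfolding U_def L_def sum_subtractf[symmetric] by (rule sum.cong) auto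
  ultimately show ?thesis unfolding mcgap_def by (simp add: sum_divide_distrib)
qed

definition affine_functional :: "((nat \<Rightarrow> real) \<Rightarrow> real) \<Rightarrow> bool" where
  "affine_functional f \<longleftrightarrow> (\<forall>(k::nat) c X. (\<Sum>l<k. c l) = 1 \<longrightarrow>
     f (\<lambda>t. \<Sum>l<k. c l * X l t) = (\<Sum>l<k. c l * f (X l)))"

lemma convhull_band:
  assumes f: "affine_functional f"
    and band: "\<And>x z. (x, z) \<in> S \<Longrightarrow> \<bar>z - f x\<bar> \<le> r"
    and xz: "(x, z) \<in> convhull S"
  shows "\<bar>z - f x\<bar> \<le> r"
proof -
  obtain k :: nat and c p where c: "\<forall>l<k. 0 \<le> c l \<and> p l \<in> S" and c1: "(\<Sum>l<k. c l) = 1"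
    and x: "x = (\<lambda>t. \<Sum>l<k. c l * fst (p l) t)" and z: "z = (\<Sum>l<k. c l * snd (p l))"
    using xz unfolding convhull_def by blast
  have "z - f x = (\<Sum>l<k. c l * (snd (p l) - f (fst (p l))))"
    using f c1 unfolding x z affine_functional_def by (simp add: right_diff_distrib sum_subtractf)
  also have "\<bar>\<dots>\<bar> \<le> (\<Sum>l<k. c l * r)"
  proof (rule order_trans[OF sum_abs sum_mono])
    fix l assume "l \<in> {..<k}"
    with c band[of "fst (p l)" "snd (p l)"] show "\<bar>c l * (snd (p l) - f (fst (p l)))\<bar> \<le> c l * r"
      by (auto simp: abs_mult intro: mult_left_mono)
  qed
  also have "\<dots> = r" using c1 by (simp add: sum_distrib_right[symmetric])
  finally show ?thesis .
qed

lemma subset_convhull: "S \<subseteq> convhull S"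
proof clarify
  fix x z assume "(x, z) \<in> S"
  then show "(x, z) \<in> convhull S"
    unfolding convhull_def mem_Collect_eq case_prod_conv
    by (intro exI[of _ "Suc 0"] exI[of _ "\<lambda>_. 1"] exI[of _ "\<lambda>_. (x, z)"]) auto
qed

lemma chgap_le_of_band:
  assumes f: "affine_functional f" and x: "x \<in> cube n"
    and band: "\<And>y. y \<in> cube n \<Longrightarrow> \<bar>bil E a y - f y\<bar> \<le> r"
  shows "chgap n E a x \<le> 2 * r"
proof -
  define Z where "Z = {z. (x, z) \<in> convhull (graphB n E a)}"
  have graph_band: "\<bar>z - f y\<bar> \<le> r" if "(y, z) \<in> graphB n E a" for y z
    using that band unfolding graphB_def by auto
  have Z: "f x - r \<le> z \<and> z \<le> f x + r" if "z \<in> Z" for z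
  proof -
    have "\<bar>z - f x\<bar> \<le> r"
      using that unfolding Z_def by (blast intro: convhull_band[OF f graph_band])
    then show ?thesis by (simp add: abs_le_iff)
  qed
  have "(x, bil E a x) \<in> convhull (graphB n E a)"
    by (rule subsetD[OF subset_convhull]) (use x in \<open>auto simp: graphB_def\<close>)
  then have "Z \<noteq> {}" unfolding Z_def by blast
  then have "cav n E a x \<le> f x + r" "f x - r \<le> vex n E a x"
    unfolding cav_def vex_def Z_def[symmetric] by (metis Z cSup_least, metis Z cInf_greatest)
  then show ?thesis unfolding chgap_def by simp
qed

text \<open>From \<open>x\<^sub>i x\<^sub>j = (2x\<^sub>i - 1)(2x\<^sub>j - 1)/4 + (x\<^sub>i + x\<^sub>j)/2 - 1/4\<close>.\<close>
definition bil_affine_part :: "(nat \<times> nat) set \<Rightarrow> (nat \<times> nat \<Rightarrow> real) \<Rightarrow> (nat \<Rightarrow> real) \<Rightarrow> real" where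
  "bil_affine_part E a x = (\<Sum>e\<in>E. a e * ((x (fst e) + x (snd e)) / 2 - 1/4))"

lemma bil_eq_centred_plus_affine_part:
  "bil E a x = bil E a (\<lambda>t. 2 * x t - 1) / 4 + bil_affine_part E a x"
  unfolding bil_eq_sum bil_affine_part_def sum_divide_distrib sum.distrib[symmetric]
  by (rule sum.cong) (auto simp: field_simps)

lemma affine_functional_bil_affine_part: "affine_functional (bil_affine_part E a)"
  unfolding affine_functional_def
proof (intro allI impI)
  fix k :: nat and c :: "nat \<Rightarrow> real" and X :: "nat \<Rightarrow> nat \<Rightarrow> real"
  assume c1: "(\<Sum>l<k. c l) = 1"
  have "(\<Sum>l<k. c l * bil_affine_part E a (X l))
      = (\<Sum>e\<in>E. \<Sum>l<k. a e * (c l * X l (fst e) / 2 + c l * X l (snd e) / 2 - c l / 4))"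
    unfolding bil_affine_part_def sum_distrib_left
    by (subst sum.swap) (intro sum.cong refl, simp add: algebra_simps)
  also have "\<dots> = bil_affine_part E a (\<lambda>t. \<Sum>l<k. c l * X l t)"
    unfolding bil_affine_part_def
    by (intro sum.cong refl) (simp add: c1 sum_distrib_left[symmetric] sum.distrib sum_subtractf
        sum_divide_distrib[symmetric] add_divide_distrib)
  finally show "bil_affine_part E a (\<lambda>t. \<Sum>l<k. c l * X l t) = (\<Sum>l<k. c l * bil_affine_part E a (X l))"
    by simp
qed

lemma abs_add_mult_le:
  fixes p q t T :: real
  assumes "\<bar>p + q\<bar> \<le> T" "\<bar>p - q\<bar> \<le> T" "\<bar>t\<bar> \<le> 1"
  shows "\<bar>p + t * q\<bar> \<le> T"
proof -
  have "p + t * q = (1 + t) / 2 * (p + q) + (1 - t) / 2 * (p - q)" by (simp add: field_simps)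
  also have "\<bar>\<dots>\<bar> \<le> (1 + t) / 2 * T + (1 - t) / 2 * T"
    using assms by (intro order_trans[OF abs_triangle_ineq] add_mono) (auto simp: abs_mult intro: mult_left_mono)
  also have "\<dots> = T" by (simp add: field_simps)
  finally show ?thesis .
qed

lemma bil_fun_upd:
  assumes "\<And>e. e \<in> E \<Longrightarrow> fst e \<noteq> snd e"
  shows "bil E a (v(k := t)) = bil E a (v(k := 0)) + t * (bil E a (v(k := 1)) - bil E a (v(k := 0)))"
  unfolding bil_eq_sum sum_subtractf[symmetric] sum_distrib_left sum.distrib[symmetric]
proof (rule sum.cong[OF refl])
  fix e assume "e \<in> E"
  with assms have "fst e \<noteq> snd e" by auto
  then show "a e * (v(k := t)) (fst e) * (v(k := t)) (snd e) = a e * (v(k := 0)) (fst e) * (v(k := 0)) (snd e) +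
      t * (a e * (v(k := 1)) (fst e) * (v(k := 1)) (snd e) - a e * (v(k := 0)) (fst e) * (v(k := 0)) (snd e))"
    by (cases "fst e = k"; cases "snd e = k") (auto simp: algebra_simps)
qed

text \<open>\<open>bil E a\<close> is affine in each coordinate separately, so its modulus over the box
  \<open>[-1,1]\<^sup>n\<close> is maximal at a vertex; the induction frees one coordinate at a time.\<close>
lemma bil_abs_le_on_box:
  assumes E: "E \<subseteq> complete_edges n"
    and signs: "\<And>s. s \<in> {1..n} \<rightarrow>\<^sub>E {1, -1} \<Longrightarrow> \<bar>bil E a s\<bar> \<le> T"
    and v: "\<And>i. i \<in> {1..n} \<Longrightarrow> \<bar>v i\<bar> \<le> 1"
  shows "\<bar>bil E a v\<bar> \<le> T"
proof -
  have box: "\<bar>bil E a v\<bar> \<le> T"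
    if "finite K" "K \<subseteq> {1..n}" "\<forall>i\<in>{1..n}. \<bar>v i\<bar> \<le> 1" "\<forall>i\<in>{1..n} - K. v i \<in> {1, -1}" for K v
    using that
  proof (induction K arbitrary: v rule: finite_induct)
    case empty
    then have "restrict v {1..n} \<in> {1..n} \<rightarrow>\<^sub>E {1, -1}" by auto
    moreover have "bil E a (restrict v {1..n}) = bil E a v"
      using E unfolding bil_eq_sum by (intro sum.cong) (auto simp: complete_edges_def)
    ultimately show ?case using signs by metis
  next
    case (insert k K)
    define p where "p = bil E a (v(k := 0))"
    define q where "q = bil E a (v(k := 1)) - p"
    have upd: "bil E a (v(k := t)) = p + t * q" for t
      unfolding p_def q_def using E by (intro bil_fun_upd) (auto simp: complete_edges_def)
    have "\<bar>bil E a (v(k := t))\<bar> \<le> T" if "t \<in> {1, -1}" for t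
      using that insert.prems by (intro insert.IH) auto
    from this[of 1] this[of "-1"] have "\<bar>p + q\<bar> \<le> T" "\<bar>p - q\<bar> \<le> T"
      by (simp_all add: upd)
    moreover have "\<bar>v k\<bar> \<le> 1" using insert.prems by auto
    moreover have "bil E a v = p + v k * q" using upd[of "v k"] by simp
    ultimately show ?case by (simp add: abs_add_mult_le)
  qed
  show ?thesis by (rule box[of "{1..n}"]) (simp_all add: v)
qed

lemma chgap_le_max_sign:
  assumes E: "E \<subseteq> complete_edges n"
    and signs: "\<And>s. s \<in> {1..n} \<rightarrow>\<^sub>E {1, -1} \<Longrightarrow> \<bar>bil E a s\<bar> \<le> T"
    and x: "x \<in> cube n"
  shows "chgap n E a x \<le> T / 2"
proof -
  have "\<bar>bil E a y - bil_affine_part E a y\<bar> \<le> T / 4" if "y \<in> cube n" for y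
  proof -
    have "\<bar>bil E a (\<lambda>t. 2 * y t - 1)\<bar> \<le> T"
      using that by (intro bil_abs_le_on_box[OF E signs]) (auto simp: cube_def abs_le_iff)
    then show ?thesis by (simp add: bil_eq_centred_plus_affine_part[of E a y])
  qed
  from chgap_le_of_band[OF affine_functional_bil_affine_part x this] show ?thesis by simp
qed

lemma exp_add_exp_minus_le:
  fixes u :: real
  shows "exp u + exp (- u) \<le> 2 * exp (u\<^sup>2 / 2)"
proof -
  define t where "t = \<bar>u\<bar>"
  have t: "0 \<le> t" "exp u + exp (- u) = exp t + exp (- t)" "u\<^sup>2 = t\<^sup>2"
    unfolding t_def by (auto simp: abs_if add.commute)
  have "-(2 * t) * (1/2) + ln (1 + (1/2) * (exp (2 * t) - 1)) \<le> (2 * t)\<^sup>2 / 8"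
    using Hoeffdings_lemma_aux[of "2 * t" "1/2"] t by simp
  then have "ln ((1 + exp (2 * t)) / 2) \<le> t + t\<^sup>2 / 2"
    by (simp add: power2_eq_square field_simps)
  then have "(1 + exp (2 * t)) / 2 \<le> exp (t + t\<^sup>2 / 2)"
    by (metis exp_le_cancel_iff exp_ln add_pos_pos exp_gt_zero zero_less_one half_gt_zero)
  then have "(1 + exp t * exp t) / 2 \<le> exp t * exp (t\<^sup>2 / 2)"
    by (simp flip: exp_add mult_2)
  then have "(exp (- t) + exp t) / 2 \<le> exp (t\<^sup>2 / 2)"
    by (simp add: exp_minus field_simps)
  then show ?thesis using t by simp
qed

lemma card_signs: "finite E \<Longrightarrow> card (E \<rightarrow>\<^sub>E {1, -1 :: real}) = 2 ^ card E"
  by (simp add: card_PiE numeral_2_eq_2)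

lemma sign_prob_nonneg: "0 \<le> sign_prob E P"
  by (simp add: sign_prob_def)

lemma sign_prob_not:
  assumes "finite E"
  shows "sign_prob E (\<lambda>a. \<not> P a) = 1 - sign_prob E P"
proof -
  let ?A = "E \<rightarrow>\<^sub>E {1, -1 :: real}"
  have "card {a \<in> ?A. \<not> P a} = card ?A - card {a \<in> ?A. P a}"
    by (subst card_Diff_subset[symmetric]) (auto intro!: arg_cong[where f = card] finite_PiE assms)
  moreover have "card {a \<in> ?A. P a} \<le> card ?A"
    by (intro card_mono finite_PiE assms) auto
  ultimately show ?thesis
    using card_signs[OF assms] by (simp add: sign_prob_def of_nat_diff diff_divide_distrib)
qed

lemma sign_prob_le_1: "finite E \<Longrightarrow> sign_prob E P \<le> 1"
  using sign_prob_not[of E P] sign_prob_nonneg[of E "\<lambda>a. \<not> P a"] by simp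

lemma sign_prob_mono:
  assumes "finite E" and "\<And>a. a \<in> E \<rightarrow>\<^sub>E {1, -1} \<Longrightarrow> P a \<Longrightarrow> Q a"
  shows "sign_prob E P \<le> sign_prob E Q"
  unfolding sign_prob_def
  by (intro divide_right_mono of_nat_mono card_mono)
    (use assms in \<open>auto intro: finite_PiE finite_subset[of _ "E \<rightarrow>\<^sub>E {1, -1}"]\<close>)

lemma sign_prob_ex_le_sum:
  assumes "finite E" and "finite S"
  shows "sign_prob E (\<lambda>a. \<exists>s\<in>S. P s a) \<le> (\<Sum>s\<in>S. sign_prob E (P s))"
proof -
  let ?A = "E \<rightarrow>\<^sub>E {1, -1 :: real}"
  have "{a \<in> ?A. \<exists>s\<in>S. P s a} = (\<Union>s\<in>S. {a \<in> ?A. P s a})" by auto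
  then have "card {a \<in> ?A. \<exists>s\<in>S. P s a} \<le> (\<Sum>s\<in>S. card {a \<in> ?A. P s a})"
    using card_UN_le[OF assms(2)] by simp
  then show ?thesis
    unfolding sign_prob_def sum_divide_distrib[symmetric]
    by (intro divide_right_mono) (simp_all flip: of_nat_sum)
qed

lemma sign_prob_sum_ge:
  assumes fin: "finite E" and w: "\<And>e. e \<in> E \<Longrightarrow> \<bar>w e\<bar> \<le> 1" and l: "0 \<le> l"
  shows "sign_prob E (\<lambda>a. t \<le> (\<Sum>e\<in>E. a e * w e)) \<le> exp (real (card E) * l\<^sup>2 / 2 - l * t)"
proof -
  let ?A = "E \<rightarrow>\<^sub>E {1, -1 :: real}"
  let ?X = "\<lambda>a. \<Sum>e\<in>E. a e * w e"
  let ?F = "{a \<in> ?A. t \<le> ?X a}"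
  have finA: "finite ?A" by (intro finite_PiE fin) auto
  have "real (card ?F) * exp (l * t) = (\<Sum>a\<in>?F. exp (l * t))" by simp
  also have "\<dots> \<le> (\<Sum>a\<in>?F. exp (l * ?X a))"
    by (rule sum_mono) (use l in \<open>auto intro: mult_left_mono\<close>)
  also have "\<dots> \<le> (\<Sum>a\<in>?A. exp (l * ?X a))"
    by (rule sum_mono2) (use finA in auto)
  also have "\<dots> = (\<Sum>a\<in>?A. \<Prod>e\<in>E. exp (l * w e * a e))"
    by (simp add: sum_distrib_left exp_sum fin mult_ac)
  also have "\<dots> = (\<Prod>e\<in>E. \<Sum>b\<in>{1, -1}. exp (l * w e * b))"
    by (rule prod_sum_PiE[symmetric]) (use fin in auto)
  also have "\<dots> \<le> (\<Prod>e\<in>E. 2 * exp (l\<^sup>2 / 2))"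
  proof (rule prod_mono)
    fix e assume "e \<in> E"
    have "(w e)\<^sup>2 \<le> 1"
      using w[OF \<open>e \<in> E\<close>] by (simp add: abs_square_le_1)
    then have "(l * w e)\<^sup>2 \<le> l\<^sup>2"
      by (simp add: power_mult_distrib mult_left_le)
    then have "exp (l * w e) + exp (- (l * w e)) \<le> 2 * exp (l\<^sup>2 / 2)"
      using exp_add_exp_minus_le[of "l * w e"] by (smt (verit) divide_right_mono exp_le_cancel_iff)
    then show "0 \<le> (\<Sum>b\<in>{1, -1}. exp (l * w e * b)) \<and> (\<Sum>b\<in>{1, -1}. exp (l * w e * b)) \<le> 2 * exp (l\<^sup>2 / 2)"
      by (simp add: add_nonneg_nonneg)
  qed
  also have "\<dots> = 2 ^ card E * exp (real (card E) * l\<^sup>2 / 2)"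
    by (simp add: power_mult_distrib flip: exp_of_nat_mult)
  finally have "real (card ?F) * exp (l * t) \<le> 2 ^ card E * exp (real (card E) * l\<^sup>2 / 2)" .
  then have "real (card ?F) \<le> 2 ^ card E * exp (real (card E) * l\<^sup>2 / 2) / exp (l * t)"
    by (simp add: pos_le_divide_eq)
  then show ?thesis
    unfolding sign_prob_def card_signs[OF fin] exp_diff by (simp add: field_simps)
qed

lemma sign_prob_exists_sign_bil_gt:
  assumes E: "E \<subseteq> complete_edges n" and l: "0 \<le> l"
  shows "sign_prob E (\<lambda>a. \<exists>s\<in>{1..n} \<rightarrow>\<^sub>E {1, -1}. T < \<bar>bil E a s\<bar>)
    \<le> 2 ^ (n + 1) * exp (real (card E) * l\<^sup>2 / 2 - l * T)"
proof -
  define S where "S = ({1..n} \<rightarrow>\<^sub>E {1, -1 :: real}) \<times> {1, -1 :: real}"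
  define w :: "(nat \<Rightarrow> real) \<times> real \<Rightarrow> nat \<times> nat \<Rightarrow> real"
    where "w = (\<lambda>(s, \<sigma>) e. \<sigma> * s (fst e) * s (snd e))"
  have finE: "finite E" using finite_subset[OF E finite_complete_edges] .
  have finS: "finite S" unfolding S_def by (intro finite_SigmaI finite_PiE) auto
  have w: "\<bar>w p e\<bar> \<le> 1" if "p \<in> S" "e \<in> E" for p e
  proof -
    obtain s \<sigma> where p: "p = (s, \<sigma>)" "s \<in> {1..n} \<rightarrow>\<^sub>E {1, -1}" "\<sigma> \<in> {1, -1}"
      using \<open>p \<in> S\<close> unfolding S_def by auto
    moreover have "fst e \<in> {1..n}" "snd e \<in> {1..n}"
      using \<open>e \<in> E\<close> E by (auto simp: complete_edges_def)
    ultimately have "s (fst e) \<in> {1, -1}" "s (snd e) \<in> {1, -1}" by auto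
    then show ?thesis using p unfolding w_def by (auto simp: abs_mult)
  qed
  have "sign_prob E (\<lambda>a. \<exists>s\<in>{1..n} \<rightarrow>\<^sub>E {1, -1}. T < \<bar>bil E a s\<bar>)
      \<le> sign_prob E (\<lambda>a. \<exists>p\<in>S. T \<le> (\<Sum>e\<in>E. a e * w p e))"
  proof (rule sign_prob_mono[OF finE])
    fix a assume "\<exists>s\<in>{1..n} \<rightarrow>\<^sub>E {1, -1}. T < \<bar>bil E a s\<bar>"
    then obtain s where s: "s \<in> {1..n} \<rightarrow>\<^sub>E {1, -1}" and gt: "T < \<bar>bil E a s\<bar>" by blast
    obtain \<sigma> :: real where "\<sigma> \<in> {1, -1}" "\<bar>bil E a s\<bar> = \<sigma> * bil E a s"
      by (metis abs_of_neg abs_of_nonneg insertCI mult_1 mult_minus1 not_le)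
    moreover have "\<sigma> * bil E a s = (\<Sum>e\<in>E. a e * w (s, \<sigma>) e)"
      unfolding bil_eq_sum w_def sum_distrib_left by (simp add: mult_ac)
    ultimately show "\<exists>p\<in>S. T \<le> (\<Sum>e\<in>E. a e * w p e)"
      using s gt unfolding S_def by (intro bexI[of _ "(s, \<sigma>)"]) auto
  qed
  also have "\<dots> \<le> (\<Sum>p\<in>S. sign_prob E (\<lambda>a. T \<le> (\<Sum>e\<in>E. a e * w p e)))"
    by (rule sign_prob_ex_le_sum[OF finE finS])
  also have "\<dots> \<le> (\<Sum>p\<in>S. exp (real (card E) * l\<^sup>2 / 2 - l * T))"
    by (intro sum_mono sign_prob_sum_ge[OF finE _ l] w)
  also have "\<dots> = 2 ^ (n + 1) * exp (real (card E) * l\<^sup>2 / 2 - l * T)"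
    unfolding S_def by (simp add: card_cartesian_product card_PiE numeral_2_eq_2)
  finally show ?thesis .
qed

lemma mcgap_ge_sqrt_chgap:
  assumes E: "E \<subseteq> complete_edges n" and a: "a \<in> E \<rightarrow>\<^sub>E {1, -1}"
    and small: "\<And>s. s \<in> {1..n} \<rightarrow>\<^sub>E {1, -1} \<Longrightarrow> \<bar>bil E a s\<bar> \<le> 4 * real (card E) / sqrt n"
  shows "sqrt n / 4 * chgap n E a (halfpt n) \<le> mcgap n E a (halfpt n)"
proof -
  have "E \<subseteq> {1..n} \<times> {1..n}" using E by (auto simp: complete_edges_def)
  moreover have "(\<Sum>e\<in>E. \<bar>a e\<bar>) = (\<Sum>e\<in>E. 1)"
    using a by (intro sum.cong) (auto simp del: PiE_iff dest!: PiE_mem)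
  ultimately have mcgap: "mcgap n E a (halfpt n) = real (card E) / 2"
    by (simp add: mcgap_halfpt)
  have "chgap n E a (halfpt n) \<le> 2 * real (card E) / sqrt n"
    using chgap_le_max_sign[OF E small halfpt_in_cube] by simp
  then have "sqrt n / 4 * chgap n E a (halfpt n) \<le> sqrt n / 4 * (2 * real (card E) / sqrt n)"
    by (rule mult_left_mono) simp_all
  also have "\<dots> \<le> real (card E) / 2" by (cases "n = 0") auto
  finally show ?thesis using mcgap by simp
qed

lemma sign_prob_mcgap_ge_sqrt_chgap:
  assumes n: "1 \<le> n"
  shows "1 - 2 ^ (n + 1) * exp (- 7 * (real n - 1) / 4) \<le> sign_prob (complete_edges n)
    (\<lambda>a. sqrt n / 4 * chgap n (complete_edges n) a (halfpt n) \<le> mcgap n (complete_edges n) a (halfpt n))"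
proof -
  define E where "E = complete_edges n"
  define T where "T = 4 * real (card E) / sqrt n"
  define l where "l = 1 / sqrt n"
  have exponent: "real (card E) * l\<^sup>2 / 2 - l * T = - 7 * (real n - 1) / 4"
    using n unfolding T_def l_def E_def card_complete_edges by (simp add: power_divide field_simps)
  have "sign_prob E (\<lambda>a. \<exists>s\<in>{1..n} \<rightarrow>\<^sub>E {1, -1}. T < \<bar>bil E a s\<bar>)
      \<le> 2 ^ (n + 1) * exp (- 7 * (real n - 1) / 4)"
    by (rule sign_prob_exists_sign_bil_gt[of E n l T, unfolded exponent]) (simp_all add: E_def l_def)
  then have "1 - 2 ^ (n + 1) * exp (- 7 * (real n - 1) / 4)
      \<le> 1 - sign_prob E (\<lambda>a. \<exists>s\<in>{1..n} \<rightarrow>\<^sub>E {1, -1}. T < \<bar>bil E a s\<bar>)"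
    by simp
  also have "\<dots> = sign_prob E (\<lambda>a. \<forall>s\<in>{1..n} \<rightarrow>\<^sub>E {1, -1}. \<bar>bil E a s\<bar> \<le> T)"
    using sign_prob_not[OF finite_complete_edges, of n "\<lambda>a. \<forall>s\<in>{1..n} \<rightarrow>\<^sub>E {1, -1}. \<bar>bil E a s\<bar> \<le> T"]
    unfolding E_def by (simp add: not_le)
  also have "\<dots> \<le> sign_prob E (\<lambda>a. sqrt n / 4 * chgap n E a (halfpt n) \<le> mcgap n E a (halfpt n))"
  proof (rule sign_prob_mono)
    show "finite E" unfolding E_def by (rule finite_complete_edges)
    fix a assume "a \<in> E \<rightarrow>\<^sub>E {1, -1}" "\<forall>s\<in>{1..n} \<rightarrow>\<^sub>E {1, -1}. \<bar>bil E a s\<bar> \<le> T"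
    then show "sqrt n / 4 * chgap n E a (halfpt n) \<le> mcgap n E a (halfpt n)"
      unfolding T_def by (intro mcgap_ge_sqrt_chgap) (auto simp: E_def)
  qed
  finally show ?thesis unfolding E_def .
qed

lemma two_pow_exp_tendsto_zero: "(\<lambda>n. 2 ^ (n + 1) * exp (- 7 * (real n - 1) / 4)) \<longlonglongrightarrow> 0"
proof -
  have "2 ^ (n + 1) * exp (- 7 * (real n - 1) / 4) = 2 * exp (7 / 4) * (2 * exp (- 7 / 4)) ^ n" for n
  proof -
    have "- 7 * (real n - 1) / 4 = 7 / 4 + real n * (- 7 / 4)" by (simp add: field_simps)
    then have "exp (- 7 * (real n - 1) / 4) = exp (7 / 4) * exp (- 7 / 4) ^ n"
      by (simp only: exp_add exp_of_nat_mult)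
    then show ?thesis by (simp add: power_mult_distrib)
  qed
  moreover have "2 * exp (- 7 / 4 :: real) < 1"
    using exp_ge_add_one_self[of "7 / 4 :: real"] by (simp add: exp_minus field_simps)
  then have "(\<lambda>n. 2 * exp (7 / 4) * (2 * exp (- 7 / 4 :: real)) ^ n) \<longlonglongrightarrow> 2 * exp (7 / 4) * 0"
    by (intro tendsto_mult tendsto_const LIMSEQ_power_zero) auto
  ultimately show ?thesis by (simp only: mult_zero_right)
qed

theorem theorem1:
  shows "(\<lambda>n. sign_prob (complete_edges n)
            (\<lambda>a. mcgap n (complete_edges n) a (halfpt n)
                 \<ge> sqrt (real n) / 4 * chgap n (complete_edges n) a (halfpt n)))
         \<longlonglongrightarrow> 1"
proof (rule tendsto_sandwich[of "\<lambda>n. 1 - 2 ^ (n + 1) * exp (- 7 * (real n - 1) / 4)" _ _ "\<lambda>_. 1"])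
  show "\<forall>\<^sub>F n in sequentially. 1 - 2 ^ (n + 1) * exp (- 7 * (real n - 1) / 4) \<le> sign_prob (complete_edges n)
      (\<lambda>a. mcgap n (complete_edges n) a (halfpt n) \<ge> sqrt (real n) / 4 * chgap n (complete_edges n) a (halfpt n))"
    using eventually_ge_at_top[of 1] by eventually_elim (rule sign_prob_mcgap_ge_sqrt_chgap)
  show "\<forall>\<^sub>F n in sequentially. sign_prob (complete_edges n)
      (\<lambda>a. mcgap n (complete_edges n) a (halfpt n) \<ge> sqrt (real n) / 4 * chgap n (complete_edges n) a (halfpt n)) \<le> 1"
    by (intro always_eventually allI sign_prob_le_1 finite_complete_edges)
  show "(\<lambda>n. 1 - 2 ^ (n + 1) * exp (- 7 * (real n - 1) / 4)) \<longlonglongrightarrow> 1"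
    using tendsto_diff[OF tendsto_const two_pow_exp_tendsto_zero, of 1] by simp
qed simp

end
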